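(* Let $\kappa_2$ be an infinite regular cardinal. If there exists an $(\aleph_0,\kappa_2)$-peculiar cut in ${}^\omega\omega$, then $\mathrm{cov}(\mathcal M)\le\kappa_2$.
   Context: $\mathrm{cov}(\mathcal M)$ is the least number of meagre subsets of the real line (equivalently of ${}^\omega2$) needed to cover it. For $f,g\in{}^\omega\omega$: $f\le^*g$ iff $f(n)\le g(n)$ for all but finitely many $n$; $f<^*g$ iff $f(n)<g(n)$ for all but finitely many $n$. For infinite regular cardinals $\kappa_1,\kappa_2$, a $(\kappa_1,\kappa_2)$-peculiar cut in ${}^\omega\omega$ is a pair $(\langle f_i:i<\kappa_1\rangle,\langle f^\alpha:\alpha<\kappa_2\rangle)$ of sequences in ${}^\omega\omega$ such that: ($\alpha$) $f_j<^*f_i$ for $i<j<\kappa_1$; ($\beta$) $f^\alpha<^*f^\beta$ for $\alpha<\beta<\kappa_2$; ($\gamma$) $f^\alpha<^*f_i$ for all $i<\kappa_1$, $\alpha<\kappa_2$; ($\delta$) if $f\in{}^\omega\omega$ and $f\le^*f_i$ for all $i<\kappa_1$, then $f\le^*f^\alpha$ for some $\alpha<\kappa_2$; ($\varepsilon$) if $f\in{}^\omega\omega$ and $f^\alpha\le^*f$ for all $\alpha<\kappa_2$, then $f_i\le^*f$ for some $i<\kappa_1$. *)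

theory Defs
  imports "HOL-Analysis.Analysis"
begin

(* Cardinals are represented as cardinal-order relations (Main's BNF cardinals):
   a cardinal kappa is a well-order r with Card_order r; its elements are Field r,
   ordered strictly by (a,b) \<in> r \<and> a \<noteq> b.  aleph_0 is natLeq. *)

definition nowhere_dense :: "real set \<Rightarrow> bool" where
  "nowhere_dense A \<longleftrightarrow> interior (closure A) = {}"

definition meagre :: "real set \<Rightarrow> bool" where
  "meagre A \<longleftrightarrow> (\<exists>N :: real set set. countable N \<and> (\<forall>B\<in>N. nowhere_dense B) \<and> A \<subseteq> \<Union>N)"

definition covM_le :: "'b rel \<Rightarrow> bool" where
  "covM_le r \<longleftrightarrow> (\<exists>F :: real set set. (\<forall>A\<in>F. meagre A) \<and> \<Union>F = UNIV \<and> (card_of F, r) \<in> ordLeq)"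

definition le_star :: "(nat \<Rightarrow> nat) \<Rightarrow> (nat \<Rightarrow> nat) \<Rightarrow> bool" where
  "le_star f g \<longleftrightarrow> (\<forall>\<^sub>F n in sequentially. f n \<le> g n)"

definition less_star :: "(nat \<Rightarrow> nat) \<Rightarrow> (nat \<Rightarrow> nat) \<Rightarrow> bool" where
  "less_star f g \<longleftrightarrow> (\<forall>\<^sub>F n in sequentially. f n < g n)"

(* (kappa1,kappa2)-peculiar cut: fl indexed by Field r1 (kappa1), fu indexed by Field r2 (kappa2) *)
definition peculiar_cut :: "'a rel \<Rightarrow> 'b rel \<Rightarrow> ('a \<Rightarrow> nat \<Rightarrow> nat) \<Rightarrow> ('b \<Rightarrow> nat \<Rightarrow> nat) \<Rightarrow> bool" where
  "peculiar_cut r1 r2 fl fu \<longleftrightarrow>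
     (\<forall>i\<in>Field r1. \<forall>j\<in>Field r1. (i,j) \<in> r1 \<and> i \<noteq> j \<longrightarrow> less_star (fl j) (fl i)) \<and>
     (\<forall>\<alpha>\<in>Field r2. \<forall>\<beta>\<in>Field r2. (\<alpha>,\<beta>) \<in> r2 \<and> \<alpha> \<noteq> \<beta> \<longrightarrow> less_star (fu \<alpha>) (fu \<beta>)) \<and>
     (\<forall>i\<in>Field r1. \<forall>\<alpha>\<in>Field r2. less_star (fu \<alpha>) (fl i)) \<and>
     (\<forall>f. (\<forall>i\<in>Field r1. le_star f (fl i)) \<longrightarrow> (\<exists>\<alpha>\<in>Field r2. le_star f (fu \<alpha>))) \<and>
     (\<forall>f. (\<forall>\<alpha>\<in>Field r2. le_star (fu \<alpha>) f) \<longrightarrow> (\<exists>i\<in>Field r1. le_star (fl i) f))"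

end

theory Submission imports Defs begin

(*
  Code every real y by the number c y n of odd values among its dyadic digits
  floor (y * 2^m), m < n, and put H y n = min {f_j n | j <= c y n}, where
  f_0 >* f_1 >* ... is the countable side of the cut.  If y has infinitely many
  odd digits, then c y n tends to infinity, so H y <=* f_i for every i, and by
  (delta) H y <=* f^alpha for some alpha.  On the other hand, for fixed alpha the
  set of y with H y <=* f^alpha is meagre: every dyadic interval contains a
  dyadic subinterval on which all digits beyond some level p are even, so there
  c y n <= p + 1 and, by (gamma), H y n > f^alpha n for all large n.  Adding the
  meagre set of reals with only finitely many odd digits, kappa_2 meagre sets
  cover the line.
*)

lemma meagre_UN_nowhere_dense:
  assumes "\<And>m::nat. nowhere_dense (A m)"
  shows "meagre (\<Union>m. A m)"
  unfolding meagre_def using assms by (intro exI[of _ "range A"]) auto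

lemma meagre_Un: "meagre A \<Longrightarrow> meagre B \<Longrightarrow> meagre (A \<union> B)"
  unfolding meagre_def by (metis Un_mono Union_Un_distrib Un_iff countable_Un)

definition dyadic_interval :: "nat \<Rightarrow> int \<Rightarrow> real set" where
  "dyadic_interval p b = {y. of_int b < y * 2^p \<and> y * 2^p < of_int b + 1}"

lemma open_dyadic_interval: "open (dyadic_interval p b)"
  unfolding dyadic_interval_def by (intro open_Collect_conj open_Collect_less continuous_intros)

lemma dyadic_interval_nonempty: "dyadic_interval p b \<noteq> {}"
proof -
  have "(of_int b + 1/2) / 2^p \<in> dyadic_interval p b"
    unfolding dyadic_interval_def by simp
  then show ?thesis by blast
qed

lemma floor_dyadic_interval: "y \<in> dyadic_interval p b \<Longrightarrow> \<lfloor>y * 2^p\<rfloor> = b"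
  unfolding dyadic_interval_def by (simp add: floor_eq_iff)

lemma dyadic_interval_refine:
  assumes "p \<le> n"
  shows "dyadic_interval n (b * 2^(n-p)) \<subseteq> dyadic_interval p b"
proof
  fix y assume y: "y \<in> dyadic_interval n (b * 2^(n-p))"
  define k :: real where "k = 2^(n-p)"
  have "k \<ge> 1" unfolding k_def by simp
  have "(2::real)^n = 2^p * k" unfolding k_def using assms
    by (metis le_add_diff_inverse power_add)
  then have "of_int b * k < (y * 2^p) * k" "(y * 2^p) * k < of_int b * k + 1"
    using y unfolding dyadic_interval_def k_def by (simp_all add: mult.assoc)
  moreover have "of_int b * k + 1 \<le> (of_int b + 1) * k" using \<open>k \<ge> 1\<close> by (simp add: algebra_simps)
  ultimately have "of_int b * k < (y * 2^p) * k" "(y * 2^p) * k < (of_int b + 1) * k" by linarith+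
  then have "of_int b < y * 2^p" "y * 2^p < of_int b + 1"
    using mult_less_cancel_right_pos[of k] \<open>k \<ge> 1\<close> by auto
  then show "y \<in> dyadic_interval p b" unfolding dyadic_interval_def by simp
qed

lemma dyadic_interval_odd_child: "dyadic_interval (Suc p) (2*b+1) \<subseteq> dyadic_interval p b"
  unfolding dyadic_interval_def by (auto simp: mult_ac)

lemma open_contains_dyadic_interval:
  assumes "open U" "x \<in> U"
  obtains p b where "p0 \<le> p" "dyadic_interval p b \<subseteq> U"
proof -
  obtain e where "e > 0" "ball x e \<subseteq> U" using assms openE by blast
  obtain q where q: "(1/2::real)^q < e" using real_arch_pow_inv[of e "1/2"] \<open>e > 0\<close> by auto
  define p where "p = q + p0"
  have "(1/2::real)^p \<le> (1/2)^q" unfolding p_def by (rule power_decreasing) auto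
  with q have p: "1 / 2^p < e" by (simp add: power_one_over)
  define b where "b = \<lfloor>x * 2^p\<rfloor>"
  have "dyadic_interval p b \<subseteq> ball x e"
  proof
    fix y assume "y \<in> dyadic_interval p b"
    moreover have "of_int b \<le> x * 2^p" "x * 2^p < of_int b + 1" unfolding b_def by linarith+
    ultimately have "\<bar>y * 2^p - x * 2^p\<bar> < 1" unfolding dyadic_interval_def by auto
    then have "\<bar>y - x\<bar> * 2^p < 1" by (simp add: left_diff_distrib[symmetric] abs_mult)
    then have "\<bar>y - x\<bar> < 1 / 2^p" by (simp add: field_simps)
    with p show "y \<in> ball x e" by (simp add: dist_real_def abs_minus_commute)
  qed
  moreover have "p0 \<le> p" unfolding p_def by simp
  ultimately show ?thesis using that \<open>ball x e \<subseteq> U\<close> by blast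
qed

lemma nowhere_dense_dyadicI:
  assumes "\<And>p b. p0 \<le> p \<Longrightarrow>
    \<exists>q c. dyadic_interval q c \<subseteq> dyadic_interval p b \<and> dyadic_interval q c \<inter> A = {}"
  shows "nowhere_dense A"
  unfolding nowhere_dense_def
proof (rule ccontr)
  assume "interior (closure A) \<noteq> {}"
  then obtain x where "x \<in> interior (closure A)" by blast
  then obtain p b where "p0 \<le> p" and pb: "dyadic_interval p b \<subseteq> interior (closure A)"
    using open_contains_dyadic_interval[OF open_interior] by metis
  then obtain q c where qc: "dyadic_interval q c \<subseteq> dyadic_interval p b"
    and disj: "dyadic_interval q c \<inter> A = {}"
    using assms by blast
  have "dyadic_interval q c \<inter> closure A = {}"
    using disj open_dyadic_interval by (simp add: open_Int_closure_eq_empty)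
  moreover have "dyadic_interval q c \<subseteq> closure A" using qc pb interior_subset by blast
  ultimately show False using dyadic_interval_nonempty by blast
qed

lemma nowhere_dense_even_digits_from:
  "nowhere_dense {y. \<forall>m\<ge>m0. even \<lfloor>y * 2^m\<rfloor>}"
proof (rule nowhere_dense_dyadicI)
  fix p b assume "m0 \<le> p"
  have "y \<notin> {y. \<forall>m\<ge>m0. even \<lfloor>y * 2^m\<rfloor>}" if "y \<in> dyadic_interval (Suc p) (2*b+1)" for y
  proof
    assume "y \<in> {y. \<forall>m\<ge>m0. even \<lfloor>y * 2^m\<rfloor>}"
    moreover have "m0 \<le> Suc p" using \<open>m0 \<le> p\<close> by simp
    ultimately have "even \<lfloor>y * 2^Suc p\<rfloor>" by blast
    then show False using floor_dyadic_interval[OF that] by simp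
  qed
  then show "\<exists>q c. dyadic_interval q c \<subseteq> dyadic_interval p b \<and>
      dyadic_interval q c \<inter> {y. \<forall>m\<ge>m0. even \<lfloor>y * 2^m\<rfloor>} = {}"
    using dyadic_interval_odd_child by blast
qed

lemma finite_odd_digits_iff:
  fixes y :: real
  shows "finite {m. odd \<lfloor>y * 2^m\<rfloor>} \<longleftrightarrow> (\<exists>m0. \<forall>m\<ge>m0. even \<lfloor>y * 2^m\<rfloor>)"
proof
  assume "finite {m. odd \<lfloor>y * 2^m\<rfloor>}"
  then obtain k where k: "{m. odd \<lfloor>y * 2^m\<rfloor>} \<subseteq> {..<k}" using finite_nat_bounded by blast
  have "even \<lfloor>y * 2^m\<rfloor>" if "k \<le> m" for m
  proof (rule ccontr)
    assume "odd \<lfloor>y * 2^m\<rfloor>"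
    then have "m < k" using k by blast
    with that show False by simp
  qed
  then show "\<exists>m0. \<forall>m\<ge>m0. even \<lfloor>y * 2^m\<rfloor>" by blast
next
  assume "\<exists>m0. \<forall>m\<ge>m0. even \<lfloor>y * 2^m\<rfloor>"
  then obtain m0 where m0: "\<forall>m\<ge>m0. even \<lfloor>y * 2^m\<rfloor>" ..
  have "{m. odd \<lfloor>y * 2^m\<rfloor>} \<subseteq> {..<m0}"
  proof
    fix m assume "m \<in> {m. odd \<lfloor>y * 2^m\<rfloor>}"
    then have "\<not> m0 \<le> m" using m0 by auto
    then show "m \<in> {..<m0}" by simp
  qed
  then show "finite {m. odd \<lfloor>y * 2^m\<rfloor>}" using finite_subset by blast
qed

lemma meagre_finite_odd_digits: "meagre {y. finite {m. odd \<lfloor>y * 2^m\<rfloor>}}"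
proof -
  have "{y::real. finite {m. odd \<lfloor>y * 2^m\<rfloor>}} = (\<Union>m0. {y. \<forall>m\<ge>m0. even \<lfloor>y * 2^m\<rfloor>})"
    unfolding finite_odd_digits_iff by blast
  then show ?thesis
    by (simp only:) (rule meagre_UN_nowhere_dense, rule nowhere_dense_even_digits_from)
qed

lemma floor_mult_power2_shift:
  assumes "m \<le> n"
  shows "\<lfloor>(y::real) * 2^m\<rfloor> = \<lfloor>y * 2^n\<rfloor> div 2^(n-m)"
proof -
  have "(2::real)^n = 2^m * 2^(n-m)" using assms by (metis le_add_diff_inverse power_add)
  then have "y * 2^m = (y * 2^n) / real_of_int (2^(n-m))" by simp
  then show ?thesis using floor_divide_real_eq_div[of "2^(n-m)" "y * 2^n"] by simp
qed

definition odd_digit_count :: "real \<Rightarrow> nat \<Rightarrow> nat" where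
  "odd_digit_count y n = card {m. m < n \<and> odd \<lfloor>y * 2^m\<rfloor>}"

lemma odd_digit_count_dyadic_interval:
  assumes "y \<in> dyadic_interval n (b * 2^(n-p))" "p \<le> n"
  shows "odd_digit_count y n \<le> Suc p"
proof -
  have "m \<le> p" if m: "m < n" "odd \<lfloor>y * 2^m\<rfloor>" for m
  proof (rule ccontr)
    assume "\<not> m \<le> p"
    have "(2::int)^(n-p) = 2^(m-p) * 2^(n-m)"
      using \<open>\<not> m \<le> p\<close> m(1) by (simp flip: power_add)
    then have split: "b * 2^(n-p) = (b * 2^(m-p)) * 2^(n-m)" by (simp add: mult.assoc)
    have "\<lfloor>y * 2^m\<rfloor> = \<lfloor>y * 2^n\<rfloor> div 2^(n-m)"
      using floor_mult_power2_shift m(1) by simp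
    also have "\<dots> = (b * 2^(m-p)) * 2^(n-m) div 2^(n-m)"
      unfolding floor_dyadic_interval[OF assms(1)] split ..
    also have "\<dots> = b * 2^(m-p)" by simp
    finally show False using m(2) \<open>\<not> m \<le> p\<close> by simp
  qed
  then have "{m. m < n \<and> odd \<lfloor>y * 2^m\<rfloor>} \<subseteq> {..p}" by blast
  then have "odd_digit_count y n \<le> card {..p}"
    unfolding odd_digit_count_def by (rule card_mono[OF finite_atMost])
  then show ?thesis by simp
qed

lemma odd_digit_count_unbounded:
  assumes "infinite {m. odd \<lfloor>y * 2^m\<rfloor>}"
  shows "\<forall>\<^sub>F n in sequentially. i \<le> odd_digit_count y n"
proof -
  obtain T where T: "finite T" "card T = i" "T \<subseteq> {m. odd \<lfloor>y * 2^m\<rfloor>}"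
    using assms infinite_arbitrarily_large by blast
  obtain k where k: "T \<subseteq> {..<k}" using finite_nat_bounded[OF T(1)] by blast
  have "i \<le> odd_digit_count y n" if "k \<le> n" for n
  proof -
    have "T \<subseteq> {m. m < n \<and> odd \<lfloor>y * 2^m\<rfloor>}" using T(3) k that by auto
    moreover have "finite {m. m < n \<and> odd \<lfloor>y * 2^m\<rfloor>}"
      by (rule finite_subset[of _ "{..<n}"]) auto
    ultimately show ?thesis unfolding odd_digit_count_def using T(2) card_mono by metis
  qed
  then show ?thesis unfolding eventually_sequentially by blast
qed

definition digit_min :: "(nat \<Rightarrow> nat \<Rightarrow> nat) \<Rightarrow> real \<Rightarrow> nat \<Rightarrow> nat" where
  "digit_min f y n = Min ((\<lambda>j. f j n) ` {..odd_digit_count y n})"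

lemma le_star_digit_min:
  assumes "infinite {m. odd \<lfloor>y * 2^m\<rfloor>}"
  shows "le_star (digit_min f y) (f i)"
  unfolding le_star_def
proof (rule eventually_mono[OF odd_digit_count_unbounded[OF assms]])
  fix n assume "i \<le> odd_digit_count y n"
  then show "digit_min f y n \<le> f i n" unfolding digit_min_def by (intro Min_le) auto
qed

lemma nowhere_dense_digit_min_le:
  assumes below: "\<And>j. less_star g (f j)"
  shows "nowhere_dense {y. \<forall>n\<ge>m0. digit_min f y n \<le> g n}"
proof (rule nowhere_dense_dyadicI)
  fix p b assume "m0 \<le> p"
  have "\<forall>\<^sub>F n in sequentially. \<forall>j\<in>{..Suc p}. g n < f j n"
    using below unfolding less_star_def by (intro eventually_ball_finite) auto
  then obtain N where N: "\<And>n j. N \<le> n \<Longrightarrow> j \<le> Suc p \<Longrightarrow> g n < f j n"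
    unfolding eventually_sequentially by auto
  define n where "n = max N p"
  have "g n < digit_min f y n" if "y \<in> dyadic_interval n (b * 2^(n-p))" for y
  proof -
    have "odd_digit_count y n \<le> Suc p"
      using odd_digit_count_dyadic_interval[OF that] unfolding n_def by simp
    then show ?thesis unfolding digit_min_def using N[of n] by (auto simp: n_def)
  qed
  moreover have "m0 \<le> n" using \<open>m0 \<le> p\<close> unfolding n_def by simp
  ultimately have "dyadic_interval n (b * 2^(n-p)) \<inter> {y. \<forall>n\<ge>m0. digit_min f y n \<le> g n} = {}"
    by force
  moreover have "dyadic_interval n (b * 2^(n-p)) \<subseteq> dyadic_interval p b"
    by (rule dyadic_interval_refine) (simp add: n_def)
  ultimately show "\<exists>q c. dyadic_interval q c \<subseteq> dyadic_interval p b \<and>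
      dyadic_interval q c \<inter> {y. \<forall>n\<ge>m0. digit_min f y n \<le> g n} = {}"
    by blast
qed

lemma meagre_digit_min_le_star:
  assumes "\<And>j. less_star g (f j)"
  shows "meagre {y. le_star (digit_min f y) g}"
proof -
  have "{y. le_star (digit_min f y) g} = (\<Union>m0. {y. \<forall>n\<ge>m0. digit_min f y n \<le> g n})"
    unfolding le_star_def eventually_sequentially by blast
  then show ?thesis
    by (simp only:) (rule meagre_UN_nowhere_dense, rule nowhere_dense_digit_min_le[OF assms])
qed

theorem corollary3p2:
  fixes r2 :: "'b rel"
  assumes "Card_order r2" and "regularCard r2" and "infinite (Field r2)"
    and "\<exists>(fl :: nat \<Rightarrow> nat \<Rightarrow> nat) (fu :: 'b \<Rightarrow> nat \<Rightarrow> nat). peculiar_cut natLeq r2 fl fu"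
  shows "covM_le r2"
proof -
  obtain fl :: "nat \<Rightarrow> nat \<Rightarrow> nat" and fu :: "'b \<Rightarrow> nat \<Rightarrow> nat"
    where below: "\<And>\<alpha> i. \<alpha> \<in> Field r2 \<Longrightarrow> less_star (fu \<alpha>) (fl i)"
      and cofinal: "\<And>f. (\<And>i. le_star f (fl i)) \<Longrightarrow> \<exists>\<alpha>\<in>Field r2. le_star f (fu \<alpha>)"
    using assms(4) unfolding peculiar_cut_def Field_natLeq by (metis UNIV_I)
  define G where
    "G \<alpha> = {y. finite {m. odd \<lfloor>y * 2^m\<rfloor>}} \<union> {y. le_star (digit_min fl y) (fu \<alpha>)}" for \<alpha>
  have "meagre (G \<alpha>)" if "\<alpha> \<in> Field r2" for \<alpha>
    unfolding G_def
    by (intro meagre_Un meagre_finite_odd_digits meagre_digit_min_le_star below that)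
  moreover have "\<Union>(G ` Field r2) = UNIV"
  proof -
    obtain \<alpha>\<^sub>0 where "\<alpha>\<^sub>0 \<in> Field r2" using assms(3) by fastforce
    moreover have "\<exists>\<alpha>\<in>Field r2. y \<in> G \<alpha>" if "infinite {m. odd \<lfloor>y * 2^m\<rfloor>}" for y
      using cofinal[OF le_star_digit_min[OF that]] unfolding G_def by blast
    ultimately show ?thesis unfolding G_def by blast
  qed
  moreover have "(card_of (G ` Field r2), r2) \<in> ordLeq"
    using card_of_image ordLeq_ordIso_trans card_of_Field_ordIso[OF assms(1)] by blast
  ultimately show ?thesis unfolding covM_le_def by blast
qed

end
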